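(* Let $g:\mathbb{Z}\to[0,\infty)$ be such that $\liminf_{k\to\infty}g(q_0k)^{1/k}\geq1$ for every $q_0\in\mathbb{N}$. Let $\xi\in\mathbb{R}$ satisfy $|\xi-p/q|\geq g(q)\geq0$ for all $p\in\mathbb{Z}$, $q\in\mathbb{N}$, let $\beta=e^{2i\pi\xi}$, $\varphi(z)=\beta z$, and $C_\varphi f=f\circ\varphi$ on $\mathrm{Hol}(\mathbb{D})$. Then $$\{\beta^n:n\in\mathbb{N}_0\}\subset\sigma(C_\varphi)\subset\{e^{2i\pi x}:x\in\mathbb{R}\setminus\mathbb{Q}\}\cup\{1\}.$$
   Context: $\mathbb{D}$ is the open unit disc, $\mathrm{Hol}(\mathbb{D})$ the Fréchet space of holomorphic functions on $\mathbb{D}$, $\mathbb{N}_0=\mathbb{N}\cup\{0\}$. $\sigma(C_\varphi)$ is the set of $\lambda\in\mathbb{C}$ such that $\lambda\mathrm{Id}-C_\varphi$ is not bijective on $\mathrm{Hol}(\mathbb{D})$. *)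

theory Defs
  imports "HOL-Complex_Analysis.Complex_Analysis"
begin

text \<open>Hol(D): holomorphic functions on the open unit disc. A function on D is represented
  canonically by its extension by 0 outside D, so equality of elements is equality on D.\<close>
definition HolD :: "(complex \<Rightarrow> complex) set" where
  "HolD = {f. f holomorphic_on ball 0 1 \<and> (\<forall>z. z \<notin> ball 0 1 \<longrightarrow> f z = 0)}"

definition comp_op :: "(complex \<Rightarrow> complex) \<Rightarrow> (complex \<Rightarrow> complex) \<Rightarrow> (complex \<Rightarrow> complex)" where
  "comp_op \<phi> f = (\<lambda>z. if z \<in> ball 0 1 then f (\<phi> z) else 0)"

definition spec_comp :: "(complex \<Rightarrow> complex) \<Rightarrow> complex set" where
  "spec_comp \<phi> = {c. \<not> bij_betw (\<lambda>f. (\<lambda>z. c * f z - comp_op \<phi> f z)) HolD HolD}"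

end

theory Submission
  imports Defs
begin

text \<open>Write \<open>e(x) = exp(2\<pi>ix)\<close>. The operator \<open>c Id - C\<^sub>\<phi>\<close> with \<open>\<phi> z = \<beta> z\<close> multiplies the
  \<open>n\<close>-th Taylor coefficient at 0 by \<open>c - \<beta>\<^sup>n\<close>. Hence \<open>\<beta>\<^sup>n\<close> is an eigenvalue with eigenfunction
  \<open>z\<^sup>n\<close>, and \<open>c Id - C\<^sub>\<phi>\<close> is bijective as soon as \<open>c \<noteq> \<beta>\<^sup>n\<close> for all \<open>n\<close> and \<open>1 / (c - \<beta>\<^sup>k)\<close>
  grows subexponentially: dividing the coefficients by \<open>c - \<beta>\<^sup>n\<close> then keeps the radius of
  convergence at least 1. For \<open>|c| \<noteq> 1\<close> the growth condition is trivial. For \<open>c = e(a/b)\<close> and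
  \<open>\<beta> = e(\<xi>)\<close> one has \<open>|c - \<beta>\<^sup>k| \<ge> dist(a/b - k\<xi>, \<int>) = k |\<xi> - p/(bk)| \<ge> g(bk)\<close> for a suitable
  integer \<open>p\<close>, and \<open>g(bk) \<ge> \<rho>\<^sup>k\<close> eventually for every \<open>\<rho> < 1\<close> by the liminf hypothesis. The same
  estimate with \<open>p = ak\<close> shows that \<open>\<xi>\<close> is irrational, so \<open>\<beta>\<^sup>n = e(n\<xi>)\<close> is not a rational rotation
  for \<open>n > 0\<close>.\<close>

definition subexponential :: "(nat \<Rightarrow> 'a::real_normed_vector) \<Rightarrow> bool" where
  "subexponential u \<longleftrightarrow> (\<forall>r>1. eventually (\<lambda>k. norm (u k) \<le> r ^ k) sequentially)"

lemma subexponentialD: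
  "subexponential u \<Longrightarrow> 1 < r \<Longrightarrow> eventually (\<lambda>k. norm (u k) \<le> r ^ k) sequentially"
  unfolding subexponential_def by blast

lemma subexponential_if_bounded:
  assumes "\<And>k. norm (u k) \<le> B"
  shows "subexponential u"
  unfolding subexponential_def
proof (intro allI impI)
  fix r :: real assume "1 < r"
  then have "filterlim (\<lambda>k. r ^ k) at_top sequentially"
    by (simp add: filterlim_realpow_sequentially_gt1 filterlim_at_infinity_imp_filterlim_at_top)
  then have "eventually (\<lambda>k. B \<le> r ^ k) sequentially"
    by (simp add: filterlim_at_top)
  then show "eventually (\<lambda>k. norm (u k) \<le> r ^ k) sequentially"
    by eventually_elim (use assms order_trans in blast)
qed

lemma summable_subexponential_mult_power_series:
  fixes u a :: "nat \<Rightarrow> complex"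
  assumes u: "subexponential u"
    and a: "\<And>w. w \<in> ball 0 1 \<Longrightarrow> summable (\<lambda>n. a n * w ^ n)"
    and w: "w \<in> ball 0 1"
  shows "summable (\<lambda>n. u n * a n * w ^ n)"
proof -
  define r where "r = 2 / (1 + norm w)"
  define t where "t = r * norm w"
  have "norm w < 1" "0 < 1 + norm w" using w by (simp_all add: add_pos_nonneg)
  then have r: "1 < r" and t: "0 \<le> t" "t < 1"
    by (auto simp: r_def t_def field_simps)
  have "norm (complex_of_real t) < norm (complex_of_real ((1 + t) / 2))"
    unfolding norm_of_real using t by simp
  moreover have "complex_of_real ((1 + t) / 2) \<in> ball 0 1"
    unfolding mem_ball_0 norm_of_real using t by simp
  ultimately have "summable (\<lambda>n. norm (a n * complex_of_real t ^ n))"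
    using powser_insidea a by blast
  then show ?thesis
  proof (rule summable_comparison_test_ev[rotated])
    show "eventually (\<lambda>n. norm (u n * a n * w ^ n) \<le> norm (a n * complex_of_real t ^ n))
        sequentially"
      using subexponentialD[OF u r]
    proof eventually_elim
      case (elim n)
      have "norm (u n * a n * w ^ n) = norm (u n) * (norm (a n) * norm w ^ n)"
        by (simp add: norm_mult norm_power)
      also have "\<dots> \<le> r ^ n * (norm (a n) * norm w ^ n)"
        using elim by (intro mult_right_mono) auto
      also have "\<dots> = norm (a n * complex_of_real t ^ n)"
        using r by (simp add: t_def norm_mult norm_power power_mult_distrib)
      finally show ?case .
    qed
  qed
qed

definition shifted_comp_op ::
    "complex \<Rightarrow> (complex \<Rightarrow> complex) \<Rightarrow> (complex \<Rightarrow> complex) \<Rightarrow> complex \<Rightarrow> complex" where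
  "shifted_comp_op c \<phi> f = (\<lambda>z. c * f z - comp_op \<phi> f z)"

lemma spec_comp_iff: "c \<in> spec_comp \<phi> \<longleftrightarrow> \<not> bij_betw (shifted_comp_op c \<phi>) HolD HolD"
  by (simp add: spec_comp_def shifted_comp_op_def[abs_def])

lemma scale_in_ball:
  fixes \<beta> z :: complex
  assumes "norm \<beta> \<le> 1" "z \<in> ball 0 1"
  shows "\<beta> * z \<in> ball 0 1"
proof -
  have "norm \<beta> * norm z \<le> norm z"
    using mult_right_mono[OF assms(1) norm_ge_zero] by simp
  then show ?thesis using assms(2) by (simp add: norm_mult)
qed

lemma holomorphic_on_compose_scale:
  assumes "norm \<beta> \<le> 1" "f holomorphic_on ball 0 1"
  shows "(\<lambda>z. f (\<beta> * z)) holomorphic_on ball 0 1"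
proof -
  have "(\<lambda>z. \<beta> * z) ` ball 0 1 \<subseteq> ball 0 1"
    using assms(1) scale_in_ball by blast
  then have "(f \<circ> (\<lambda>z. \<beta> * z)) holomorphic_on ball 0 1"
    by (intro holomorphic_on_compose holomorphic_intros holomorphic_on_subset[OF assms(2)])
  then show ?thesis by (simp add: o_def)
qed

lemma shifted_comp_op_scale_on_ball:
  "z \<in> ball 0 1 \<Longrightarrow> shifted_comp_op c (\<lambda>z. \<beta> * z) f z = c * f z - f (\<beta> * z)"
  by (simp add: shifted_comp_op_def comp_op_def)

lemma shifted_comp_op_scale_HolD:
  assumes "norm \<beta> \<le> 1" "f \<in> HolD"
  shows "shifted_comp_op c (\<lambda>z. \<beta> * z) f \<in> HolD"
proof -
  have hf: "f holomorphic_on ball 0 1" and "\<And>z. z \<notin> ball 0 1 \<Longrightarrow> f z = 0"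
    using assms(2) by (auto simp: HolD_def)
  moreover have "(\<lambda>z. c * f z - f (\<beta> * z)) holomorphic_on ball 0 1"
    by (intro holomorphic_intros hf holomorphic_on_compose_scale[OF assms(1) hf])
  then have "shifted_comp_op c (\<lambda>z. \<beta> * z) f holomorphic_on ball 0 1"
    by (rule holomorphic_transform) (simp add: shifted_comp_op_scale_on_ball)
  ultimately show ?thesis
    by (simp add: HolD_def shifted_comp_op_def comp_op_def)
qed

lemma holomorphic_scaling_eigenfunction_eq_0:
  fixes D :: "complex \<Rightarrow> complex"
  assumes \<beta>: "norm \<beta> \<le> 1" and c: "\<And>n. c \<noteq> \<beta> ^ n"
    and D: "D holomorphic_on ball 0 1"
    and eigen: "\<And>z. z \<in> ball 0 1 \<Longrightarrow> D (\<beta> * z) = c * D z"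
    and w: "w \<in> ball 0 1"
  shows "D w = 0"
proof -
  have taylor_coeff_0: "(deriv ^^ n) D 0 = 0" for n
  proof -
    have "\<beta> ^ n * (deriv ^^ n) D 0 = (deriv ^^ n) (\<lambda>z. D (\<beta> * z)) 0"
      using higher_deriv_compose_linear[OF D _ _ _ scale_in_ball[OF \<beta>], of "ball 0 1" 0 n] by simp
    also have "\<dots> = (deriv ^^ n) (\<lambda>z. c * D z) 0"
      by (rule higher_deriv_transform_within_open[where S = "ball 0 1"])
         (auto intro!: holomorphic_intros D holomorphic_on_compose_scale[OF \<beta> D] eigen)
    also have "\<dots> = c * (deriv ^^ n) D 0"
      by (rule higher_deriv_cmult[OF D]) auto
    finally show ?thesis
      using c[of n] by (metis mult_cancel_right)
  qed
  have "(\<lambda>n. (deriv ^^ n) D 0 / fact n * (w - 0) ^ n) sums D w"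
    by (rule holomorphic_power_series[OF D w])
  then show ?thesis
    by (simp add: taylor_coeff_0) (metis sums_unique2 sums_zero)
qed

lemma inj_on_shifted_comp_op_scale:
  assumes \<beta>: "norm \<beta> \<le> 1" and c: "\<And>n. c \<noteq> \<beta> ^ n"
  shows "inj_on (shifted_comp_op c (\<lambda>z. \<beta> * z)) HolD"
proof (rule inj_onI)
  fix f g
  assume f: "f \<in> HolD" and g: "g \<in> HolD"
    and eq: "shifted_comp_op c (\<lambda>z. \<beta> * z) f = shifted_comp_op c (\<lambda>z. \<beta> * z) g"
  have "f z = g z" for z
  proof (cases "z \<in> ball 0 1")
    case True
    have "(\<lambda>z. f z - g z) holomorphic_on ball 0 1"
      using f g by (auto simp: HolD_def intro!: holomorphic_intros)
    moreover have "f (\<beta> * w) - g (\<beta> * w) = c * (f w - g w)" if "w \<in> ball 0 1" for w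
    proof -
      have "c * f w - f (\<beta> * w) = c * g w - g (\<beta> * w)"
        using fun_cong[OF eq, of w] that by (simp add: shifted_comp_op_scale_on_ball)
      then show ?thesis by (simp add: algebra_simps)
    qed
    ultimately have "f z - g z = 0"
      using holomorphic_scaling_eigenfunction_eq_0[OF \<beta> c, of "\<lambda>z. f z - g z"] True by blast
    then show ?thesis by simp
  next
    case False
    then show ?thesis using f g by (simp add: HolD_def)
  qed
  then show "f = g" by blast
qed

lemma shifted_comp_op_scale_surj:
  assumes \<beta>: "norm \<beta> \<le> 1" and c: "\<And>n. c \<noteq> \<beta> ^ n"
    and resolvent: "subexponential (\<lambda>k. 1 / (c - \<beta> ^ k))"
    and h: "h \<in> HolD"
  shows "\<exists>f\<in>HolD. shifted_comp_op c (\<lambda>z. \<beta> * z) f = h"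
proof -
  have hh: "h holomorphic_on ball 0 1" and h0: "\<And>z. z \<notin> ball 0 1 \<Longrightarrow> h z = 0"
    using h by (auto simp: HolD_def)
  define b where "b n = (deriv ^^ n) h 0 / fact n" for n
  have h_sums: "(\<lambda>n. b n * w ^ n) sums h w" if "w \<in> ball 0 1" for w
    using holomorphic_power_series[OF hh that] by (simp add: b_def)
  define a where "a n = 1 / (c - \<beta> ^ n) * b n" for n
  define f where "f w = (if w \<in> ball 0 1 then \<Sum>n. a n * w ^ n else 0)" for w
  have f_sums: "(\<lambda>n. a n * w ^ n) sums f w" if w: "w \<in> ball 0 1" for w
  proof -
    have "summable (\<lambda>n. a n * w ^ n)"
      unfolding a_def using summable_subexponential_mult_power_series[OF resolvent _ w] h_sums
      by (meson sums_summable)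
    then show ?thesis using w by (simp add: f_def summable_sums)
  qed
  have "f holomorphic_on ball 0 1"
    by (rule power_series_holomorphic[where a = a]) (use f_sums in simp)
  then have f: "f \<in> HolD" by (simp add: HolD_def f_def)
  have "shifted_comp_op c (\<lambda>z. \<beta> * z) f z = h z" for z
  proof (cases "z \<in> ball 0 1")
    case True
    have "(\<lambda>n. c * (a n * z ^ n) - a n * (\<beta> * z) ^ n) sums (c * f z - f (\<beta> * z))"
      by (intro sums_diff sums_mult f_sums True scale_in_ball[OF \<beta>])
    moreover have "c * (a n * z ^ n) - a n * (\<beta> * z) ^ n = b n * z ^ n" for n
    proof -
      have "c * (a n * z ^ n) - a n * (\<beta> * z) ^ n = (c - \<beta> ^ n) * a n * z ^ n"
        by (simp add: power_mult_distrib algebra_simps)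
      also have "\<dots> = b n * z ^ n"
        using c[of n] by (simp add: a_def)
      finally show ?thesis .
    qed
    ultimately have "c * f z - f (\<beta> * z) = h z"
      using h_sums[OF True] sums_unique2 by simp
    then show ?thesis using True by (simp add: shifted_comp_op_scale_on_ball)
  next
    case False
    then show ?thesis by (simp add: shifted_comp_op_def comp_op_def f_def h0)
  qed
  then show ?thesis using f by blast
qed

lemma bij_betw_shifted_comp_op_scale:
  assumes "norm \<beta> \<le> 1" "\<And>n. c \<noteq> \<beta> ^ n" "subexponential (\<lambda>k. 1 / (c - \<beta> ^ k))"
  shows "bij_betw (shifted_comp_op c (\<lambda>z. \<beta> * z)) HolD HolD"
  unfolding bij_betw_def
  using inj_on_shifted_comp_op_scale[OF assms(1,2)] shifted_comp_op_scale_HolD[OF assms(1)]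
    shifted_comp_op_scale_surj[OF assms] by blast

lemma power_in_spec_comp_scale:
  assumes \<beta>: "norm \<beta> \<le> 1"
  shows "\<beta> ^ n \<in> spec_comp (\<lambda>z. \<beta> * z)"
proof -
  define f where "f z = (if z \<in> ball 0 1 then z ^ n else 0)" for z :: complex
  have "(\<lambda>z. z ^ n) holomorphic_on ball 0 1" by (intro holomorphic_intros)
  then have "f holomorphic_on ball 0 1" by (rule holomorphic_transform) (simp add: f_def)
  then have "f \<in> HolD" by (simp add: HolD_def f_def)
  moreover have "(\<lambda>z. 0) \<in> HolD" by (simp add: HolD_def)
  moreover have "f (1 / 2) \<noteq> 0"
    by (simp add: f_def)
  moreover have "shifted_comp_op (\<beta> ^ n) (\<lambda>z. \<beta> * z) f z =
      shifted_comp_op (\<beta> ^ n) (\<lambda>z. \<beta> * z) (\<lambda>z. 0) z" for z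
    using scale_in_ball[OF \<beta>, of z]
    by (cases "z \<in> ball 0 1") (simp_all add: shifted_comp_op_def comp_op_def f_def power_mult_distrib)
  ultimately show ?thesis
    unfolding spec_comp_iff bij_betw_def inj_on_def by (metis (no_types, lifting) ext)
qed

lemma exp_2pi_i_power:
  "exp (2 * pi * \<i> * complex_of_real x) ^ n = exp (2 * pi * \<i> * complex_of_real (real n * x))"
  by (simp add: exp_of_nat_mult[symmetric] mult_ac)

lemma exp_2pi_i_add:
  "exp (2 * pi * \<i> * complex_of_real (x + y)) =
     exp (2 * pi * \<i> * complex_of_real x) * exp (2 * pi * \<i> * complex_of_real y)"
  by (simp add: distrib_left exp_add)

lemma exp_2pi_i_of_int: "exp (2 * pi * \<i> * complex_of_real (of_int m)) = 1"
  by (simp add: exp_eq_1)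

lemma unit_circle_eq_exp_2pi_i:
  assumes "norm c = 1"
  obtains x where "c = exp (2 * pi * \<i> * complex_of_real x)"
proof
  show "c = exp (2 * pi * \<i> * complex_of_real (Arg c / (2 * pi)))"
    using assms complex_norm_eq_1_exp_eq by (simp add: mult.commute)
qed

lemma abs_le_3_abs_sin:
  fixes y :: real
  assumes "\<bar>y\<bar> \<le> 2"
  shows "\<bar>y\<bar> \<le> 3 * \<bar>sin y\<bar>"
proof -
  have "\<bar>sin y - (\<Sum>m<3. sin_coeff m * y ^ m)\<bar> \<le> inverse (fact 3) * \<bar>y\<bar> ^ 3"
    by (rule Maclaurin_sin_bound)
  then have "\<bar>sin y - y\<bar> \<le> \<bar>y\<bar> * \<bar>y\<bar>\<^sup>2 / 6"
    by (simp add: numeral_3_eq_3 sin_coeff_def fact_numeral power2_eq_square field_simps)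
  also have "\<dots> \<le> \<bar>y\<bar> * 2\<^sup>2 / 6"
    using assms by (intro divide_right_mono mult_left_mono power_mono) auto
  finally have "\<bar>sin y - y\<bar> \<le> 2 / 3 * \<bar>y\<bar>" by simp
  then show ?thesis by linarith
qed

lemma abs_le_norm_exp_2pi_i_minus_1:
  fixes s :: real
  assumes "\<bar>s\<bar> \<le> 1 / 2"
  shows "\<bar>s\<bar> \<le> norm (exp (2 * pi * \<i> * complex_of_real s) - 1)"
proof -
  have "\<bar>pi * s\<bar> \<le> pi / 2"
    using assms by (simp add: abs_mult)
  then have "\<bar>pi * s\<bar> \<le> 3 * \<bar>sin (pi * s)\<bar>"
    using pi_less_4 by (intro abs_le_3_abs_sin) linarith
  moreover have "3 * \<bar>s\<bar> \<le> \<bar>pi * s\<bar>"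
    using pi_gt3 by (simp add: abs_mult mult_right_mono)
  moreover have "norm (exp (2 * pi * \<i> * complex_of_real s) - 1) = 2 * \<bar>sin (pi * s)\<bar>"
    using dist_exp_i_1[of "2 * pi * s"] by (simp add: mult_ac)
  ultimately show ?thesis by linarith
qed

lemma eventually_power_le_if_Liminf_root_ge_1:
  fixes u :: "nat \<Rightarrow> real"
  assumes u: "\<And>k. 0 \<le> u k"
    and liminf: "1 \<le> Liminf sequentially (\<lambda>k. ereal (u k powr (1 / real k)))"
    and \<rho>: "0 < \<rho>" "\<rho> < 1"
  shows "eventually (\<lambda>k. \<rho> ^ k \<le> u k) sequentially"
proof -
  have "ereal \<rho> < 1" using \<rho> by simp
  then have "eventually (\<lambda>k. ereal \<rho> < ereal (u k powr (1 / real k))) sequentially"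
    using liminf unfolding le_Liminf_iff by blast
  with eventually_gt_at_top[of 0] show ?thesis
  proof eventually_elim
    case (elim k)
    then have root: "\<rho> < u k powr (1 / real k)" by simp
    then have "0 < u k" using \<rho> u[of k] by (cases "u k = 0") auto
    have "\<rho> ^ k \<le> (u k powr (1 / real k)) ^ k"
      using root \<rho> by (intro power_mono) auto
    also have "\<dots> = u k"
      using \<open>0 < u k\<close> elim by (simp add: powr_realpow[symmetric] powr_powr)
    finally show ?case .
  qed
qed

lemma norm_exp_2pi_i_rat_minus_power_ge:
  fixes g :: "int \<Rightarrow> real" and \<xi> :: real and a :: int and b k :: nat
  assumes dioph: "\<And>(p::int) (q::nat). q > 0 \<Longrightarrow> \<bar>\<xi> - real_of_int p / real q\<bar> \<ge> g (int q)"
    and b: "b > 0" and k: "k > 0"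
  shows "g (int b * int k) \<le>
    norm (exp (2 * pi * \<i> * complex_of_real (of_int a / real b)) - exp (2 * pi * \<i> * complex_of_real \<xi>) ^ k)"
proof -
  define m where "m = round (of_int a / real b - real k * \<xi>)"
  define s where "s = of_int a / real b - real k * \<xi> - of_int m"
  have s: "\<bar>s\<bar> \<le> 1 / 2"
    using of_int_round_abs_le[of "of_int a / real b - real k * \<xi>"]
    by (simp add: s_def m_def abs_minus_commute)
  define e where "e x = exp (2 * pi * \<i> * complex_of_real x)" for x
  have "e (of_int a / real b) = e (real k * \<xi> + s + of_int m)"
    by (simp add: s_def)
  also have "\<dots> = e \<xi> ^ k * e s"
    unfolding e_def exp_2pi_i_add exp_2pi_i_of_int exp_2pi_i_power by simp
  also have "\<dots> - e \<xi> ^ k = e \<xi> ^ k * (e s - 1)"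
    by (simp add: algebra_simps)
  finally have gap: "norm (e (of_int a / real b) - e \<xi> ^ k) = norm (e s - 1)"
    by (simp add: norm_mult norm_power e_def)
  have s_eq: "s = - real k * (\<xi> - real_of_int (a - m * int b) / real (b * k))"
    using b k by (simp add: s_def field_simps)
  have "g (int b * int k) \<le> \<bar>\<xi> - real_of_int (a - m * int b) / real (b * k)\<bar>"
    using dioph[of "b * k" "a - m * int b"] b k by simp
  also have "\<dots> \<le> real k * \<bar>\<xi> - real_of_int (a - m * int b) / real (b * k)\<bar>"
    using k by (simp add: mult_le_cancel_right1)
  also have "\<dots> = \<bar>s\<bar>"
    by (simp add: s_eq abs_mult)
  finally show ?thesis
    using gap abs_le_norm_exp_2pi_i_minus_1[OF s] unfolding e_def by linarith
qed

lemma not_Rats_if_Diophantine_bound: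
  fixes g :: "int \<Rightarrow> real" and \<xi> :: real
  assumes g_nonneg: "\<And>n. g n \<ge> 0"
    and g_liminf: "\<And>q0::nat. q0 > 0 \<Longrightarrow>
          Liminf sequentially (\<lambda>k::nat. ereal (g (int q0 * int k) powr (1 / real k))) \<ge> 1"
    and dioph: "\<And>(p::int) (q::nat). q > 0 \<Longrightarrow> \<bar>\<xi> - real_of_int p / real q\<bar> \<ge> g (int q)"
  shows "\<xi> \<notin> \<rat>"
proof
  assume "\<xi> \<in> \<rat>"
  then obtain a :: int and b :: nat where b: "b > 0" and \<xi>: "\<xi> = of_int a / real b"
    by (metis Rats_cases' of_int_of_nat_eq zero_less_imp_eq_int)
  have "eventually (\<lambda>k. (1 / 2) ^ k \<le> g (int b * int k) \<and> k > 0) sequentially"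
    using eventually_power_le_if_Liminf_root_ge_1[OF g_nonneg g_liminf[OF b], of "1 / 2"]
      eventually_gt_at_top[of 0] by (auto intro: eventually_conj)
  then obtain k where lower: "(1 / 2) ^ k \<le> g (int b * int k)" and k: "k > 0"
    using eventually_happens'[OF sequentially_bot] by blast
  note lower
  also have "g (int b * int k) \<le> \<bar>\<xi> - real_of_int (a * int k) / real (b * k)\<bar>"
    using dioph[of "b * k" "a * int k"] b k by simp
  also have "\<dots> = 0"
    using b k by (simp add: \<xi>)
  finally show False
    using zero_less_power[of "1 / 2 :: real" k] by linarith
qed

lemma subexponential_inverse_rat_minus_power:
  fixes g :: "int \<Rightarrow> real" and \<xi> x :: real
  assumes g_nonneg: "\<And>n. g n \<ge> 0"
    and g_liminf: "\<And>q0::nat. q0 > 0 \<Longrightarrow>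
          Liminf sequentially (\<lambda>k::nat. ereal (g (int q0 * int k) powr (1 / real k))) \<ge> 1"
    and dioph: "\<And>(p::int) (q::nat). q > 0 \<Longrightarrow> \<bar>\<xi> - real_of_int p / real q\<bar> \<ge> g (int q)"
    and x: "x \<in> \<rat>"
  shows "subexponential (\<lambda>k. 1 / (exp (2 * pi * \<i> * complex_of_real x) - exp (2 * pi * \<i> * complex_of_real \<xi>) ^ k))"
  unfolding subexponential_def
proof (intro allI impI)
  fix r :: real assume r: "1 < r"
  obtain a :: int and b :: nat where b: "b > 0" and x: "x = of_int a / real b"
    using x by (metis Rats_cases' of_int_of_nat_eq zero_less_imp_eq_int)
  have "eventually (\<lambda>k. (1 / r) ^ k \<le> g (int b * int k)) sequentially"
    using r by (intro eventually_power_le_if_Liminf_root_ge_1 g_nonneg g_liminf b) auto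
  with eventually_gt_at_top[of 0]
  show "eventually (\<lambda>k. norm (1 / (exp (2 * pi * \<i> * complex_of_real x) -
      exp (2 * pi * \<i> * complex_of_real \<xi>) ^ k)) \<le> r ^ k) sequentially"
  proof eventually_elim
    case (elim k)
    then have "(1 / r) ^ k \<le> norm (exp (2 * pi * \<i> * complex_of_real x) - exp (2 * pi * \<i> * complex_of_real \<xi>) ^ k)"
      (is "_ \<le> norm ?d")
      using norm_exp_2pi_i_rat_minus_power_ge[OF dioph b, of k a] x by simp
    then have "norm (1 / ?d) \<le> 1 / (1 / r) ^ k"
      using r by (simp add: norm_divide frac_le)
    then show ?case by (simp add: power_one_over)
  qed
qed

lemma subexponential_inverse_off_circle:
  fixes \<beta> c :: complex
  assumes \<beta>: "norm \<beta> = 1" and c: "norm c \<noteq> 1"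
  shows "subexponential (\<lambda>k. 1 / (c - \<beta> ^ k))"
proof (rule subexponential_if_bounded)
  fix k
  have "\<bar>norm c - 1\<bar> \<le> norm (c - \<beta> ^ k)"
    using norm_triangle_ineq3[of c "\<beta> ^ k"] \<beta> by (simp add: norm_power)
  moreover have "0 < \<bar>norm c - 1\<bar>" using c by simp
  ultimately show "norm (1 / (c - \<beta> ^ k)) \<le> 1 / \<bar>norm c - 1\<bar>"
    by (simp add: norm_divide frac_le)
qed

theorem theorem4p5:
  fixes g :: "int \<Rightarrow> real" and \<xi> :: real and \<beta> :: complex
  assumes g_nonneg: "\<And>n. g n \<ge> 0"
    and g_liminf: "\<And>q0::nat. q0 > 0 \<Longrightarrow>
          Liminf sequentially (\<lambda>k::nat. ereal (g (int q0 * int k) powr (1 / real k))) \<ge> 1"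
    and dioph: "\<And>(p::int) (q::nat). q > 0 \<Longrightarrow> \<bar>\<xi> - real_of_int p / real q\<bar> \<ge> g (int q)"
    and beta: "\<beta> = exp (2 * pi * \<i> * complex_of_real \<xi>)"
  shows "{\<beta> ^ n | n::nat. True} \<subseteq> spec_comp (\<lambda>z. \<beta> * z)
       \<and> spec_comp (\<lambda>z. \<beta> * z) \<subseteq>
           {exp (2 * pi * \<i> * complex_of_real x) | x. x \<notin> \<rat>} \<union> {1}"
proof -
  have \<beta>: "norm \<beta> = 1" by (simp add: beta)
  have \<xi>: "\<xi> \<notin> \<rat>" by (rule not_Rats_if_Diophantine_bound[OF g_nonneg g_liminf dioph])
  have "c \<notin> spec_comp (\<lambda>z. \<beta> * z)"
    if c: "c \<notin> {exp (2 * pi * \<i> * complex_of_real x) | x. x \<notin> \<rat>} \<union> {1}" for c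
  proof -
    have "c \<noteq> \<beta> ^ n" for n
    proof (cases "n = 0")
      case False
      have "real n * \<xi> \<notin> \<rat>"
        using \<xi> False Rats_divide[of "real n * \<xi>" "real n"] by auto
      moreover have "\<beta> ^ n = exp (2 * pi * \<i> * complex_of_real (real n * \<xi>))"
        unfolding beta by (rule exp_2pi_i_power)
      ultimately show ?thesis using c by blast
    qed (use c in simp)
    moreover have "subexponential (\<lambda>k. 1 / (c - \<beta> ^ k))"
    proof (cases "norm c = 1")
      case True
      then obtain x where x: "c = exp (2 * pi * \<i> * complex_of_real x)"
        by (rule unit_circle_eq_exp_2pi_i)
      then have "x \<in> \<rat>" using c by blast
      then show ?thesis
        using subexponential_inverse_rat_minus_power[OF g_nonneg g_liminf dioph] x beta by blast
    qed (use subexponential_inverse_off_circle[OF \<beta>] in blast)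
    ultimately show ?thesis
      using bij_betw_shifted_comp_op_scale \<beta> by (simp add: spec_comp_iff)
  qed
  then show ?thesis
    using power_in_spec_comp_scale \<beta> by auto
qed

end
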